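(* Fix $N\in\mathbb{N}$. Let $\mathrm{WCM}_N$ be the random directed multigraph on $[N]$ with $x_{ij}=1_{\{U_i^1=j\}}+1_{\{U_i^2=j\}}$ directed edges from $i$ to $j$, where $(U_i^1,U_i^2)_{i\in[N]}$ are $2N$ independent uniform random variables on $[N]$. Let $(Y_1,\dots,Y_N)$ be multinomially distributed with $2N$ trials and $N$ categories each of probability $1/N$, and given $(Y_i)$, let $\mathrm{DCM}_N(d^-,d^+)$ be the directed configuration model with out-degrees $d_i^+=2$ and in-degrees $d_i^-=Y_i$ for all $i\in[N]$. Then $\mathrm{WCM}_N$ is equal in law to this (randomized) $\mathrm{DCM}_N(d^-,d^+)$.
   Context: Directed configuration model: given in-degrees $(d_i^-)$ and out-degrees $(d_i^+)$ on $[N]$ with $\sum_i d_i^-=\sum_i d_i^+=s$, give vertex $i$ a set of $d_i^+$ out-half-edges and $d_i^-$ in-half-edges. Enumerating all $s$ out-half-edges in some order, match the first one with a uniformly chosen in-half-edge, the second with a uniformly chosen remaining in-half-edge, and so on (equivalently, a uniform bijection between out- and in-half-edges). The resulting multigraph $\mathrm{DCM}_N(d^-,d^+)$ has one directed edge from $i$ to $j$ for each out-half-edge of $i$ matched with an in-half-edge of $j$ (loops and multiple edges allowed). Digraphs are identified with their matrices $(x_{ij})$ of edge multiplicities. *)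

theory Defs
  imports "HOL-Probability.Probability"
begin

text \<open>Vertices are {..<N} (0-indexed version of [N]). A directed multigraph is
  identified with its matrix of edge multiplicities, a function nat => nat => nat that
  vanishes outside {..<N} x {..<N}.\<close>

definition multinomial_unif_pmf :: "nat \<Rightarrow> nat \<Rightarrow> (nat \<Rightarrow> nat) pmf" where
  "multinomial_unif_pmf n N = embed_pmf (\<lambda>y.
     if (\<forall>i. i \<ge> N \<longrightarrow> y i = 0) \<and> (\<Sum>i<N. y i) = n
     then real (fact n) / (\<Prod>i<N. real (fact (y i))) * (1 / real N) ^ n
     else 0)"

definition half_edges :: "nat \<Rightarrow> (nat \<Rightarrow> nat) \<Rightarrow> (nat \<times> nat) set" where
  "half_edges N d = {(i, k). i < N \<and> k < d i}"

definition DCM :: "nat \<Rightarrow> (nat \<Rightarrow> nat) \<Rightarrow> (nat \<Rightarrow> nat) \<Rightarrow> (nat \<Rightarrow> nat \<Rightarrow> nat) pmf" where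
  "DCM N dminus dplus =
     map_pmf (\<lambda>\<sigma> i j. card {h \<in> half_edges N dplus. fst h = i \<and> fst (\<sigma> h) = j})
       (pmf_of_set {\<sigma> \<in> half_edges N dplus \<rightarrow>\<^sub>E half_edges N dminus.
                       bij_betw \<sigma> (half_edges N dplus) (half_edges N dminus)})"

definition WCM :: "nat \<Rightarrow> (nat \<Rightarrow> nat \<Rightarrow> nat) pmf" where
  "WCM N =
     map_pmf (\<lambda>U i j. if i < N \<and> j < N
                       then (if U (i, 1::nat) = j then 1 else 0) + (if U (i, 2) = j then 1 else 0)
                       else 0)
       (Pi_pmf ({..<N} \<times> {1, 2}) 0 (\<lambda>_. pmf_of_set {..<N}))"

end

theory Submission
  imports Defs "HOL-Combinatorics.Permutations"
begin

text \<open>Both sides are images of one uniform object: the map t sending each of the 2N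
  out-half-edges to its target vertex. In WCM_N, t is uniform on all N^(2N) maps. In the
  configuration model, t(h) is the vertex of the in-half-edge matched to h. A map t with
  in-degree vector Y arises from exactly \<Prod>_j Y_j! of the (2N)! matchings, so given Y the
  induced t is uniform among the maps with in-degree vector Y; and the in-degree vector of a
  uniform map is multinomial, as there are (2N)!/\<Prod>_j Y_j! such maps. Hence randomising Y
  multinomially makes t uniform.\<close>

lemma card_bijections_PiE:
  assumes "finite A" "finite B" "card A = card B"
  shows "card {f \<in> A \<rightarrow>\<^sub>E B. bij_betw f A B} = fact (card A)"
proof -
  obtain g where g: "bij_betw g B A"
    using finite_same_card_bij[OF assms(2,1)] assms(3) by metis
  define g' where "g' = inv_into B g"
  have g': "bij_betw g' A B"
    unfolding g'_def using g by (rule bij_betw_inv_into)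
  have "bij_betw (\<lambda>p. restrict (g' \<circ> p) A) {p. p permutes A} {f \<in> A \<rightarrow>\<^sub>E B. bij_betw f A B}"
  proof (rule bij_betw_byWitness[where f' = "\<lambda>f x. if x \<in> A then g (f x) else x"])
    show "\<forall>p\<in>{p. p permutes A}. (\<lambda>x. if x \<in> A then g (restrict (g' \<circ> p) A x) else x) = p"
      using g by (auto simp: g'_def permutes_in_image permutes_not_in bij_betw_inv_into_right)
    show "\<forall>f\<in>{f \<in> A \<rightarrow>\<^sub>E B. bij_betw f A B}. restrict (g' \<circ> (\<lambda>x. if x \<in> A then g (f x) else x)) A = f"
      using g by (auto simp: g'_def bij_betw_inv_into_left PiE_iff extensional_def fun_eq_iff)
    show "(\<lambda>p. restrict (g' \<circ> p) A) ` {p. p permutes A} \<subseteq> {f \<in> A \<rightarrow>\<^sub>E B. bij_betw f A B}"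
      using g' by (auto simp: permutes_in_image bij_betw_apply intro: bij_betw_trans[OF permutes_imp_bij])
    show "(\<lambda>f x. if x \<in> A then g (f x) else x) ` {f \<in> A \<rightarrow>\<^sub>E B. bij_betw f A B} \<subseteq> {p. p permutes A}"
    proof clarify
      fix f assume "f \<in> A \<rightarrow>\<^sub>E B" "bij_betw f A B"
      then have "bij_betw (g \<circ> f) A A" using g by (blast intro: bij_betw_trans)
      then have "bij_betw (\<lambda>x. if x \<in> A then g (f x) else x) A A"
        by (rule bij_betw_cong[THEN iffD1, rotated]) simp
      then show "(\<lambda>x. if x \<in> A then g (f x) else x) permutes A"
        by (rule bij_imp_permutes) simp
    qed
  qed
  then have "card {f \<in> A \<rightarrow>\<^sub>E B. bij_betw f A B} = card {p. p permutes A}"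
    by (simp add: bij_betw_same_card)
  with assms(1) show ?thesis by (simp add: card_permutations)
qed

lemma bij_betw_fibrewise_iff:
  assumes "a \<in> A \<rightarrow> L" "b \<in> B \<rightarrow> L"
  shows "bij_betw \<sigma> A B \<and> (\<forall>x\<in>A. b (\<sigma> x) = a x) \<longleftrightarrow>
         (\<forall>l\<in>L. bij_betw \<sigma> {x \<in> A. a x = l} {y \<in> B. b y = l})"
proof
  assume "bij_betw \<sigma> A B \<and> (\<forall>x\<in>A. b (\<sigma> x) = a x)"
  then have bij: "bij_betw \<sigma> A B" and label: "\<And>x. x \<in> A \<Longrightarrow> b (\<sigma> x) = a x" by auto
  show "\<forall>l\<in>L. bij_betw \<sigma> {x \<in> A. a x = l} {y \<in> B. b y = l}"
  proof
    fix l
    have "inj_on \<sigma> {x \<in> A. a x = l}"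
      using bij by (auto simp: bij_betw_def intro: inj_on_subset)
    moreover have "\<sigma> ` {x \<in> A. a x = l} = {y \<in> B. b y = l}"
      using bij label by (fastforce simp: bij_betw_def)
    ultimately show "bij_betw \<sigma> {x \<in> A. a x = l} {y \<in> B. b y = l}"
      by (simp add: bij_betw_def)
  qed
next
  assume fibres: "\<forall>l\<in>L. bij_betw \<sigma> {x \<in> A. a x = l} {y \<in> B. b y = l}"
  have label: "b (\<sigma> x) = a x" if "x \<in> A" for x
    using that assms(1) fibres by (fastforce dest: bij_betwE)
  have "inj_on \<sigma> A"
  proof (rule inj_onI)
    fix x x' assume x: "x \<in> A" and x': "x' \<in> A" and eq: "\<sigma> x = \<sigma> x'"
    then have "a x' = a x" using label by metis
    moreover have "inj_on \<sigma> {z \<in> A. a z = a x}"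
      using fibres x assms(1) by (auto simp: bij_betw_def)
    ultimately show "x = x'" using x x' eq by (auto dest: inj_onD)
  qed
  moreover have "\<sigma> ` A = B"
  proof
    show "\<sigma> ` A \<subseteq> B"
      using fibres assms(1) by (fastforce dest: bij_betwE)
    show "B \<subseteq> \<sigma> ` A"
      using fibres assms(2) by (fastforce simp: bij_betw_def)
  qed
  ultimately show "bij_betw \<sigma> A B \<and> (\<forall>x\<in>A. b (\<sigma> x) = a x)"
    using label by (simp add: bij_betw_def)
qed

lemma card_fibrewise_bijections:
  assumes "finite L" "finite A" "finite B" "a \<in> A \<rightarrow> L" "b \<in> B \<rightarrow> L"
    and same_card: "\<And>l. l \<in> L \<Longrightarrow> card {x \<in> A. a x = l} = card {y \<in> B. b y = l}"
  shows "card {\<sigma> \<in> A \<rightarrow>\<^sub>E B. bij_betw \<sigma> A B \<and> (\<forall>x\<in>A. b (\<sigma> x) = a x)} =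
         (\<Prod>l\<in>L. fact (card {x \<in> A. a x = l}))"
proof -
  define F where "F l = {x \<in> A. a x = l}" for l
  define G where "G l = {y \<in> B. b y = l}" for l
  have fibres_iff: "bij_betw \<sigma> A B \<and> (\<forall>x\<in>A. b (\<sigma> x) = a x) \<longleftrightarrow> (\<forall>l\<in>L. bij_betw \<sigma> (F l) (G l))"
    for \<sigma> unfolding F_def G_def by (rule bij_betw_fibrewise_iff[OF assms(4,5)])
  have "bij_betw (\<lambda>\<sigma>. \<lambda>l\<in>L. restrict \<sigma> (F l))
          {\<sigma> \<in> A \<rightarrow>\<^sub>E B. \<forall>l\<in>L. bij_betw \<sigma> (F l) (G l)}
          (\<Pi>\<^sub>E l\<in>L. {f \<in> F l \<rightarrow>\<^sub>E G l. bij_betw f (F l) (G l)})"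
  proof (rule bij_betw_byWitness[where f' = "\<lambda>\<phi>. \<lambda>x\<in>A. \<phi> (a x) x"])
    show "\<forall>\<sigma>\<in>{\<sigma> \<in> A \<rightarrow>\<^sub>E B. \<forall>l\<in>L. bij_betw \<sigma> (F l) (G l)}.
            (\<lambda>x\<in>A. (\<lambda>l\<in>L. restrict \<sigma> (F l)) (a x) x) = \<sigma>"
      using assms(4) by (auto simp: F_def PiE_iff extensional_def fun_eq_iff)
    show "\<forall>\<phi>\<in>\<Pi>\<^sub>E l\<in>L. {f \<in> F l \<rightarrow>\<^sub>E G l. bij_betw f (F l) (G l)}.
            (\<lambda>l\<in>L. restrict (\<lambda>x\<in>A. \<phi> (a x) x) (F l)) = \<phi>"
      by (auto simp: F_def PiE_iff extensional_def fun_eq_iff)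
    show "(\<lambda>\<sigma>. \<lambda>l\<in>L. restrict \<sigma> (F l)) ` {\<sigma> \<in> A \<rightarrow>\<^sub>E B. \<forall>l\<in>L. bij_betw \<sigma> (F l) (G l)}
            \<subseteq> (\<Pi>\<^sub>E l\<in>L. {f \<in> F l \<rightarrow>\<^sub>E G l. bij_betw f (F l) (G l)})"
      by (auto simp: bij_betw_apply)
    show "(\<lambda>\<phi>. \<lambda>x\<in>A. \<phi> (a x) x) ` (\<Pi>\<^sub>E l\<in>L. {f \<in> F l \<rightarrow>\<^sub>E G l. bij_betw f (F l) (G l)})
            \<subseteq> {\<sigma> \<in> A \<rightarrow>\<^sub>E B. \<forall>l\<in>L. bij_betw \<sigma> (F l) (G l)}"
    proof (rule image_subsetI)
      fix \<phi> assume \<phi>: "\<phi> \<in> (\<Pi>\<^sub>E l\<in>L. {f \<in> F l \<rightarrow>\<^sub>E G l. bij_betw f (F l) (G l)})"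
      have "(\<lambda>x\<in>A. \<phi> (a x) x) \<in> A \<rightarrow>\<^sub>E B"
        using \<phi> assms(4) by (fastforce simp: F_def G_def)
      moreover have "bij_betw (\<lambda>x\<in>A. \<phi> (a x) x) (F l) (G l)" if "l \<in> L" for l
        using \<phi> that by (subst bij_betw_cong[where g = "\<phi> l"]) (auto simp: F_def)
      ultimately show "(\<lambda>x\<in>A. \<phi> (a x) x) \<in> {\<sigma> \<in> A \<rightarrow>\<^sub>E B. \<forall>l\<in>L. bij_betw \<sigma> (F l) (G l)}"
        by blast
    qed
  qed
  then have "card {\<sigma> \<in> A \<rightarrow>\<^sub>E B. \<forall>l\<in>L. bij_betw \<sigma> (F l) (G l)} =
             (\<Prod>l\<in>L. card {f \<in> F l \<rightarrow>\<^sub>E G l. bij_betw f (F l) (G l)})"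
    by (simp add: bij_betw_same_card card_PiE[OF assms(1)])
  also have "\<dots> = (\<Prod>l\<in>L. fact (card (F l)))"
    using assms(2,3) same_card by (intro prod.cong refl card_bijections_PiE) (auto simp: F_def G_def)
  finally show ?thesis
    by (simp add: fibres_iff F_def)
qed

lemma bij_betw_reindex_PiE_dflt:
  assumes "bij_betw e B A"
  shows "bij_betw (\<lambda>U. restrict (U \<circ> e) B) (PiE_dflt A d (\<lambda>_. C)) (B \<rightarrow>\<^sub>E C)"
proof (rule bij_betw_byWitness[where f' = "\<lambda>t x. if x \<in> A then t (inv_into B e x) else d"])
  show "\<forall>U\<in>PiE_dflt A d (\<lambda>_. C). (\<lambda>x. if x \<in> A then restrict (U \<circ> e) B (inv_into B e x) else d) = U"
    using assms by (auto simp: PiE_dflt_def fun_eq_iff bij_betw_inv_into_right inv_into_into bij_betw_def)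
  show "\<forall>t\<in>B \<rightarrow>\<^sub>E C. restrict ((\<lambda>x. if x \<in> A then t (inv_into B e x) else d) \<circ> e) B = t"
    using assms by (auto simp: fun_eq_iff bij_betw_inv_into_left bij_betw_apply PiE_iff extensional_def)
  show "(\<lambda>U. restrict (U \<circ> e) B) ` PiE_dflt A d (\<lambda>_. C) \<subseteq> B \<rightarrow>\<^sub>E C"
    using assms by (auto simp: PiE_dflt_def bij_betw_apply)
  show "(\<lambda>t x. if x \<in> A then t (inv_into B e x) else d) ` (B \<rightarrow>\<^sub>E C) \<subseteq> PiE_dflt A d (\<lambda>_. C)"
    using assms by (auto simp: PiE_dflt_def bij_betw_def inv_into_into)
qed

lemma cond_pmf_of_set:
  assumes "finite A" "A \<inter> S \<noteq> {}"
  shows "cond_pmf (pmf_of_set A) S = pmf_of_set (A \<inter> S)"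
proof (rule pmf_eqI)
  fix x
  have "A \<noteq> {}" using assms(2) by blast
  then show "pmf (cond_pmf (pmf_of_set A) S) x = pmf (pmf_of_set (A \<inter> S)) x"
    using assms by (simp add: pmf_cond measure_pmf_of_set card_gt_0_iff indicator_def)
qed

lemma pmf_of_set_disintegrate:
  assumes "finite A" "A \<noteq> {}"
  shows "pmf_of_set A = map_pmf g (pmf_of_set A) \<bind> (\<lambda>y. pmf_of_set {x \<in> A. g x = y})"
proof -
  have "map_pmf g (pmf_of_set A) \<bind> (\<lambda>y. cond_pmf (pmf_of_set A) {x. g x = y}) = pmf_of_set A"
    by (rule bind_cond_pmf_cancel) (auto simp: vimage_def eq_commute)
  moreover have "cond_pmf (pmf_of_set A) {x. g x = y} = pmf_of_set {x \<in> A. g x = y}"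
    if "y \<in> set_pmf (map_pmf g (pmf_of_set A))" for y
    using that assms by (subst cond_pmf_of_set) (auto simp: Int_def)
  ultimately show ?thesis
    by (metis (no_types, lifting) bind_pmf_cong)
qed

lemma map_pmf_of_set_equal_fibres:
  assumes "finite A" "B \<noteq> {}" "f ` A \<subseteq> B" "n > 0"
    and "\<And>y. y \<in> B \<Longrightarrow> card {x \<in> A. f x = y} = n"
  shows "map_pmf f (pmf_of_set A) = pmf_of_set B"
proof -
  have fibres_nonempty: "{x \<in> A. f x = y} \<noteq> {}" if "y \<in> B" for y
    using assms(4,5) that by fastforce
  have A_UN: "(\<Union>y\<in>B. {x \<in> A. f x = y}) = A"
    using assms(3) by blast
  have "finite B"
    using assms(1,3) fibres_nonempty by (blast intro: finite_surj)
  have "pmf_of_set (\<Union>y\<in>B. {x \<in> A. f x = y}) = pmf_of_set B \<bind> (\<lambda>y. pmf_of_set {x \<in> A. f x = y})"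
    using assms fibres_nonempty by (intro pmf_of_set_UN) (auto simp: A_UN disjoint_family_on_def)
  then have "map_pmf f (pmf_of_set A) = pmf_of_set B \<bind> (\<lambda>y. map_pmf f (pmf_of_set {x \<in> A. f x = y}))"
    by (simp add: A_UN map_bind_pmf)
  also have "\<dots> = pmf_of_set B \<bind> return_pmf"
  proof (rule bind_pmf_cong[OF refl])
    fix y assume "y \<in> set_pmf (pmf_of_set B)"
    with \<open>finite B\<close> assms(2) have "y \<in> B" by simp
    then show "map_pmf f (pmf_of_set {x \<in> A. f x = y}) = return_pmf y"
      using assms(1) fibres_nonempty
      by (subst map_pmf_cong[where g = "\<lambda>_. y", OF refl]) auto
  qed
  finally show ?thesis by (simp add: bind_return_pmf')
qed

definition degree_sequences :: "nat \<Rightarrow> nat \<Rightarrow> (nat \<Rightarrow> nat) set" where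
  "degree_sequences N s = {Y. (\<forall>i. N \<le> i \<longrightarrow> Y i = 0) \<and> (\<Sum>i<N. Y i) = s}"

definition in_degree :: "'a set \<Rightarrow> ('a \<Rightarrow> nat) \<Rightarrow> nat \<Rightarrow> nat" where
  "in_degree H t j = card {h \<in> H. t h = j}"

definition matchings :: "'a set \<Rightarrow> nat \<Rightarrow> (nat \<Rightarrow> nat) \<Rightarrow> ('a \<Rightarrow> nat \<times> nat) set" where
  "matchings H N Y = {\<sigma> \<in> H \<rightarrow>\<^sub>E half_edges N Y. bij_betw \<sigma> H (half_edges N Y)}"

definition target_map :: "'a set \<Rightarrow> ('a \<Rightarrow> nat \<times> nat) \<Rightarrow> 'a \<Rightarrow> nat" where
  "target_map H \<sigma> = (\<lambda>h\<in>H. fst (\<sigma> h))"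

lemma half_edges_Sigma: "half_edges N d = Sigma {..<N} (\<lambda>i. {..<d i})"
  by (auto simp: half_edges_def)

lemma finite_half_edges [simp]: "finite (half_edges N d)"
  by (simp add: half_edges_Sigma)

lemma card_half_edges: "card (half_edges N d) = (\<Sum>i<N. d i)"
  by (simp add: half_edges_Sigma)

lemma card_half_edges_at:
  assumes "\<forall>i. N \<le> i \<longrightarrow> d i = 0"
  shows "card {p \<in> half_edges N d. fst p = j} = d j"
proof (cases "j < N")
  case True
  then have "{p \<in> half_edges N d. fst p = j} = Pair j ` {..<d j}"
    by (auto simp: half_edges_def)
  then show ?thesis by (simp add: card_image inj_on_def)
next
  case False
  then have "{p \<in> half_edges N d. fst p = j} = {}"
    by (auto simp: half_edges_def)
  then show ?thesis using assms False by simp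
qed

lemma in_degree_in_degree_sequences:
  assumes "finite H" "t \<in> H \<rightarrow>\<^sub>E {..<N}"
  shows "in_degree H t \<in> degree_sequences N (card H)"
proof -
  have "H = (\<Union>j<N. {h \<in> H. t h = j})"
    using assms(2) by auto
  then have "card H = (\<Sum>j<N. in_degree H t j)"
    using assms(1) by (subst (1) \<open>H = _\<close>, subst card_UN_disjoint) (auto simp: in_degree_def)
  moreover have "in_degree H t j = 0" if "N \<le> j" for j
  proof -
    have "{h \<in> H. t h = j} = {}" using assms(2) that by force
    then show ?thesis unfolding in_degree_def by (metis card.empty)
  qed
  ultimately show ?thesis
    by (simp add: degree_sequences_def)
qed

lemma target_map_matchings:
  assumes "\<sigma> \<in> matchings H N Y" "\<forall>i. N \<le> i \<longrightarrow> Y i = 0"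
  shows "target_map H \<sigma> \<in> H \<rightarrow>\<^sub>E {..<N}" and "in_degree H (target_map H \<sigma>) = Y"
proof -
  have \<sigma>: "\<sigma> \<in> H \<rightarrow>\<^sub>E half_edges N Y" "bij_betw \<sigma> H (half_edges N Y)"
    using assms(1) by (auto simp: matchings_def)
  then show "target_map H \<sigma> \<in> H \<rightarrow>\<^sub>E {..<N}"
    by (force simp: target_map_def half_edges_def)
  have "\<forall>j\<in>UNIV. bij_betw \<sigma> {h \<in> H. target_map H \<sigma> h = j} {p \<in> half_edges N Y. fst p = j}"
    using \<sigma>(2) by (subst bij_betw_fibrewise_iff[symmetric]) (auto simp: target_map_def)
  then have "card {h \<in> H. target_map H \<sigma> h = j} = Y j" for j
    by (subst bij_betw_same_card[of \<sigma> _ "{p \<in> half_edges N Y. fst p = j}"])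
       (simp_all add: card_half_edges_at[OF assms(2)])
  then show "in_degree H (target_map H \<sigma>) = Y"
    by (simp add: in_degree_def fun_eq_iff)
qed

lemma finite_matchings [simp]: "finite H \<Longrightarrow> finite (matchings H N Y)"
  unfolding matchings_def by (simp add: finite_PiE)

lemma card_matchings:
  assumes "finite H" "Y \<in> degree_sequences N (card H)"
  shows "card (matchings H N Y) = fact (card H)"
  using assms card_bijections_PiE[of H "half_edges N Y"]
  by (simp add: matchings_def card_half_edges degree_sequences_def)

lemma card_matchings_with_target_map:
  assumes "finite H" "t \<in> H \<rightarrow>\<^sub>E {..<N}" "in_degree H t = Y"
  shows "card {\<sigma> \<in> matchings H N Y. target_map H \<sigma> = t} = (\<Prod>j<N. fact (Y j))"
proof -
  have Y_support: "\<forall>i. N \<le> i \<longrightarrow> Y i = 0"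
    using in_degree_in_degree_sequences[OF assms(1,2)] assms(3) by (simp add: degree_sequences_def)
  have "target_map H \<sigma> = t \<longleftrightarrow> (\<forall>h\<in>H. fst (\<sigma> h) = t h)" for \<sigma>
    using assms(2) by (auto simp: target_map_def fun_eq_iff PiE_iff extensional_def)
  then have "{\<sigma> \<in> matchings H N Y. target_map H \<sigma> = t} =
      {\<sigma> \<in> H \<rightarrow>\<^sub>E half_edges N Y. bij_betw \<sigma> H (half_edges N Y) \<and> (\<forall>h\<in>H. fst (\<sigma> h) = t h)}"
    by (auto simp: matchings_def)
  also have "card \<dots> = (\<Prod>j<N. fact (card {h \<in> H. t h = j}))"
  proof (rule card_fibrewise_bijections)
    show "fst \<in> half_edges N Y \<rightarrow> {..<N}"
      by (auto simp: half_edges_def)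
  qed (use assms card_half_edges_at[OF Y_support] in \<open>auto simp: in_degree_def\<close>)
  moreover have "card {h \<in> H. t h = j} = Y j" for j
    using assms(3) by (auto simp: in_degree_def)
  ultimately show ?thesis
    by simp
qed

lemma card_in_degree_fibre:
  assumes "finite H" "Y \<in> degree_sequences N (card H)"
  shows "card {t \<in> H \<rightarrow>\<^sub>E {..<N}. in_degree H t = Y} * (\<Prod>j<N. fact (Y j)) = fact (card H)"
proof -
  let ?T = "{t \<in> H \<rightarrow>\<^sub>E {..<N}. in_degree H t = Y}"
  have "finite ?T"
    using assms(1) by (simp add: finite_PiE)
  have support: "\<forall>i. N \<le> i \<longrightarrow> Y i = 0"
    using assms(2) by (simp add: degree_sequences_def)
  \<comment> \<open>Double counting: sort the matchings by their target maps.\<close>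
  have "matchings H N Y = (\<Union>t\<in>?T. {\<sigma> \<in> matchings H N Y. target_map H \<sigma> = t})"
  proof (intro equalityI subsetI)
    fix \<sigma> assume "\<sigma> \<in> matchings H N Y"
    with target_map_matchings[OF this support]
    show "\<sigma> \<in> (\<Union>t\<in>?T. {\<sigma> \<in> matchings H N Y. target_map H \<sigma> = t})"
      by blast
  qed blast
  then have "fact (card H) = card (\<Union>t\<in>?T. {\<sigma> \<in> matchings H N Y. target_map H \<sigma> = t})"
    using card_matchings[OF assms] by simp
  also have "\<dots> = (\<Sum>t\<in>?T. card {\<sigma> \<in> matchings H N Y. target_map H \<sigma> = t})"
    using assms(1) \<open>finite ?T\<close> by (intro card_UN_disjoint) auto
  also have "\<dots> = (\<Sum>t\<in>?T. \<Prod>j<N. fact (Y j))"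
    using assms(1) by (intro sum.cong refl card_matchings_with_target_map) auto
  finally show ?thesis
    by simp
qed

lemma multinomial_unif_pmf_eq_in_degree_law:
  assumes "finite H" "N > 0"
  shows "multinomial_unif_pmf (card H) N = map_pmf (in_degree H) (pmf_of_set (H \<rightarrow>\<^sub>E {..<N}))"
    (is "_ = ?p")
proof -
  let ?T = "H \<rightarrow>\<^sub>E {..<N}"
  have T: "finite ?T" "?T \<noteq> {}" "card ?T = N ^ card H"
    using assms by (auto simp: finite_PiE card_PiE PiE_eq_empty_iff)
  have pmf_p: "pmf ?p Y = (if Y \<in> degree_sequences N (card H)
                    then real (fact (card H)) / (\<Prod>i<N. real (fact (Y i))) * (1 / real N) ^ card H
                    else 0)" for Y
  proof (cases "Y \<in> degree_sequences N (card H)")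
    case True
    have "pmf ?p Y = real (card {t \<in> ?T. in_degree H t = Y}) / real (card ?T)"
      using T by (simp add: pmf_map measure_pmf_of_set vimage_def Int_def)
    also have "real (card {t \<in> ?T. in_degree H t = Y}) = real (fact (card H)) / (\<Prod>i<N. real (fact (Y i)))"
    proof -
      have "real (card {t \<in> ?T. in_degree H t = Y}) * (\<Prod>i<N. real (fact (Y i))) = real (fact (card H))"
        using arg_cong[OF card_in_degree_fibre[OF assms(1) True], of real] by simp
      moreover have "(\<Prod>i<N. real (fact (Y i))) > 0"
        by (simp add: prod_pos)
      ultimately show ?thesis
        by (simp add: eq_divide_eq)
    qed
    finally show ?thesis
      using True T(3) by (simp add: power_one_over)
  next
    case False
    then have "Y \<notin> set_pmf ?p"
      using T assms(1) in_degree_in_degree_sequences by auto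
    then show ?thesis
      using False by (simp add: pmf_eq_0_set_pmf)
  qed
  have "multinomial_unif_pmf (card H) N = embed_pmf (pmf ?p)"
    unfolding multinomial_unif_pmf_def pmf_p degree_sequences_def by simp
  then show ?thesis
    by (simp add: type_definition.Rep_inverse[OF td_pmf_embed_pmf])
qed

lemma map_target_map_uniform_matching:
  assumes "finite H" "Y \<in> degree_sequences N (card H)"
  shows "map_pmf (target_map H) (pmf_of_set (matchings H N Y)) =
         pmf_of_set {t \<in> H \<rightarrow>\<^sub>E {..<N}. in_degree H t = Y}"
proof (rule map_pmf_of_set_equal_fibres)
  have "card {t \<in> H \<rightarrow>\<^sub>E {..<N}. in_degree H t = Y} * (\<Prod>j<N. fact (Y j)) \<noteq> 0"
    using card_in_degree_fibre[OF assms] by simp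
  then show "{t \<in> H \<rightarrow>\<^sub>E {..<N}. in_degree H t = Y} \<noteq> {}"
    by (metis card.empty mult_is_0)
  have support: "\<forall>i. N \<le> i \<longrightarrow> Y i = 0"
    using assms(2) by (simp add: degree_sequences_def)
  show "target_map H ` matchings H N Y \<subseteq> {t \<in> H \<rightarrow>\<^sub>E {..<N}. in_degree H t = Y}"
  proof (rule image_subsetI)
    fix \<sigma> assume "\<sigma> \<in> matchings H N Y"
    with target_map_matchings[OF this support]
    show "target_map H \<sigma> \<in> {t \<in> H \<rightarrow>\<^sub>E {..<N}. in_degree H t = Y}"
      by simp
  qed
  show "card {\<sigma> \<in> matchings H N Y. target_map H \<sigma> = t} = (\<Prod>j<N. fact (Y j))"
    if "t \<in> {t \<in> H \<rightarrow>\<^sub>E {..<N}. in_degree H t = Y}" for t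
    using that assms(1) by (auto intro: card_matchings_with_target_map)
qed (use assms(1) in auto)

theorem pmf_of_set_PiE_eq_configuration_model:
  assumes "finite H" "N > 0"
  shows "pmf_of_set (H \<rightarrow>\<^sub>E {..<N}) =
         multinomial_unif_pmf (card H) N \<bind> (\<lambda>Y. map_pmf (target_map H) (pmf_of_set (matchings H N Y)))"
proof -
  let ?T = "H \<rightarrow>\<^sub>E {..<N}"
  have T: "finite ?T" "?T \<noteq> {}"
    using assms by (auto simp: finite_PiE PiE_eq_empty_iff)
  have "pmf_of_set ?T = map_pmf (in_degree H) (pmf_of_set ?T) \<bind> (\<lambda>Y. pmf_of_set {t \<in> ?T. in_degree H t = Y})"
    using T by (rule pmf_of_set_disintegrate)
  also have "\<dots> = multinomial_unif_pmf (card H) N \<bind> (\<lambda>Y. map_pmf (target_map H) (pmf_of_set (matchings H N Y)))"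
  proof (rule bind_pmf_cong)
    show "map_pmf (in_degree H) (pmf_of_set ?T) = multinomial_unif_pmf (card H) N"
      using assms by (rule multinomial_unif_pmf_eq_in_degree_law[symmetric])
    fix Y assume "Y \<in> set_pmf (multinomial_unif_pmf (card H) N)"
    then have "Y \<in> set_pmf (map_pmf (in_degree H) (pmf_of_set ?T))"
      using multinomial_unif_pmf_eq_in_degree_law[OF assms] by simp
    then have "Y \<in> degree_sequences N (card H)"
      using T assms(1) in_degree_in_degree_sequences by auto
    then show "pmf_of_set {t \<in> ?T. in_degree H t = Y} = map_pmf (target_map H) (pmf_of_set (matchings H N Y))"
      using assms(1) by (simp add: map_target_map_uniform_matching)
  qed
  finally show ?thesis .
qed

definition edge_counts :: "(nat \<times> nat) set \<Rightarrow> (nat \<times> nat \<Rightarrow> nat) \<Rightarrow> nat \<Rightarrow> nat \<Rightarrow> nat" where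
  "edge_counts H t i j = card {h \<in> H. fst h = i \<and> t h = j}"

lemma card_two_half_edges_at:
  "card {h \<in> half_edges N (\<lambda>_. 2). fst h = i \<and> P h} =
   (if i < N then (if P (i, 0) then 1 else 0) + (if P (i, 1) then 1 else 0) else 0)"
proof (cases "i < N")
  case True
  have "{h \<in> half_edges N (\<lambda>_. 2). fst h = i \<and> P h} = Pair i ` {k \<in> {..<2}. P (i, k)}"
    using True by (auto simp: half_edges_def)
  moreover have "{k \<in> {..<2::nat}. P (i, k)} = (if P (i, 0) then {0} else {}) \<union> (if P (i, 1) then {1} else {})"
    by (auto simp: less_2_cases_iff intro: gr0I)
  ultimately show ?thesis
    using True by (simp add: card_image)
next
  case False
  then have "{h \<in> half_edges N (\<lambda>_. 2). fst h = i \<and> P h} = {}"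
    by (auto simp: half_edges_def)
  then show ?thesis
    using False by simp
qed

lemma DCM_eq_edge_counts:
  "DCM N Y d = map_pmf (edge_counts (half_edges N d) \<circ> target_map (half_edges N d))
                 (pmf_of_set (matchings (half_edges N d) N Y))"
  unfolding DCM_def matchings_def
  by (intro map_pmf_cong refl) (auto simp: edge_counts_def target_map_def fun_eq_iff intro!: arg_cong[where f = card])

lemma WCM_eq_edge_counts:
  assumes "N > 0"
  shows "WCM N = map_pmf (edge_counts (half_edges N (\<lambda>_. 2)))
                   (pmf_of_set (half_edges N (\<lambda>_. 2) \<rightarrow>\<^sub>E {..<N}))"
proof -
  define H where "H = half_edges N (\<lambda>_. 2)"
  define A where "A = {..<N} \<times> {1::nat, 2}"
  define D where "D = PiE_dflt A 0 (\<lambda>_. {..<N})"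
  \<comment> \<open>WCM labels the two choices of vertex i by 1 and 2, its out-half-edges by 0 and 1.\<close>
  define r where "r U = restrict (U \<circ> (\<lambda>(i, k). (i, Suc k))) H" for U :: "nat \<times> nat \<Rightarrow> nat"
  have "bij_betw (\<lambda>(i, k). (i, Suc k)) H A"
    by (rule bij_betwI[where g = "\<lambda>(i, k). (i, k - 1)"]) (auto simp: H_def A_def half_edges_def)
  then have r: "bij_betw r D (H \<rightarrow>\<^sub>E {..<N})"
    unfolding r_def D_def by (rule bij_betw_reindex_PiE_dflt)
  have D: "finite D" "D \<noteq> {}"
    using assms by (auto simp: D_def A_def)
  have "Pi_pmf ({..<N} \<times> {1, 2}) 0 (\<lambda>_. pmf_of_set {..<N}) = pmf_of_set D"
    unfolding D_def A_def using assms by (intro Pi_pmf_of_set) auto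
  then have "WCM N = map_pmf (\<lambda>U i j. if i < N \<and> j < N
                   then (if U (i, 1) = j then 1 else 0) + (if U (i, 2) = j then 1 else 0) else 0)
                 (pmf_of_set D)"
    unfolding WCM_def by (rule arg_cong)
  also have "\<dots> = map_pmf (edge_counts H \<circ> r) (pmf_of_set D)"
  proof (rule map_pmf_cong[OF refl], intro ext)
    fix U i j assume "U \<in> set_pmf (pmf_of_set D)"
    then have U_range: "U (i, k) < N" if "i < N" "k \<in> {1, 2}" for k
      using D that by (auto simp: D_def A_def PiE_dflt_def)
    have "edge_counts H (r U) i j = card {h \<in> H. fst h = i \<and> U (fst h, Suc (snd h)) = j}"
      unfolding edge_counts_def r_def by (rule arg_cong[where f = card]) auto
    also have "\<dots> = (if i < N then (if U (i, 1) = j then 1 else 0) + (if U (i, 2) = j then 1 else 0) else 0)"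
      unfolding H_def card_two_half_edges_at by (simp add: numeral_2_eq_2)
    finally show "(if i < N \<and> j < N
                   then (if U (i, 1) = j then 1 else 0) + (if U (i, 2) = j then 1 else 0) else 0) =
                  (edge_counts H \<circ> r) U i j"
      using U_range by auto
  qed
  also have "\<dots> = map_pmf (edge_counts H) (pmf_of_set (H \<rightarrow>\<^sub>E {..<N}))"
    using map_pmf_of_set_bij_betw[OF r D(2,1)] by (simp add: map_pmf_compose)
  finally show ?thesis
    by (simp add: H_def)
qed

theorem proposition2p1:
  fixes N :: nat
  assumes "N \<ge> 1"
  shows "WCM N = bind_pmf (multinomial_unif_pmf (2 * N) N) (\<lambda>Y. DCM N Y (\<lambda>_. 2))"
proof -
  let ?H = "half_edges N (\<lambda>_. 2)"
  have N: "N > 0" and card_H: "card ?H = 2 * N"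
    using assms by (simp_all add: card_half_edges)
  have "WCM N = map_pmf (edge_counts ?H) (pmf_of_set (?H \<rightarrow>\<^sub>E {..<N}))"
    using N by (rule WCM_eq_edge_counts)
  also have "\<dots> = map_pmf (edge_counts ?H) (multinomial_unif_pmf (card ?H) N \<bind>
                    (\<lambda>Y. map_pmf (target_map ?H) (pmf_of_set (matchings ?H N Y))))"
    using N by (simp add: pmf_of_set_PiE_eq_configuration_model)
  also have "\<dots> = multinomial_unif_pmf (2 * N) N \<bind> (\<lambda>Y. DCM N Y (\<lambda>_. 2))"
    by (simp add: card_H map_bind_pmf DCM_eq_edge_counts map_pmf_compose)
  finally show ?thesis .
qed

end
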